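(* Let $\boldsymbol\zeta$ be a restriction sequence for $\mathsf{DIHP}(G,n,\alpha,K)$ that is not cyclic, and suppose $\|\boldsymbol\zeta\|\le\gamma n$ for some $\gamma\in(0,1)$. Then $g_{\boldsymbol\zeta}$ is $(n,20N^2,\gamma n\log_2N,0)$-bounded.
   Context: $N\ge2$, $\mathbb Z_N=\mathbb Z/N\mathbb Z$. $G=(\mathcal V,\mathcal E,N,(\mu_{\mathsf e}))$ is a distribution-labeled $k$-graph: finite set $\mathcal V$, finite multiset $\mathcal E$ of ordered $k$-tuples of distinct vertices, one-wise independent distributions $\mu_{\mathsf e}$ on $\mathbb Z_N^k$ (each coordinate marginal uniform), pmf $\mu_{\mathsf e}(\cdot)$. For $\mathsf e=(\mathsf v_1,\dots,\mathsf v_k)$, $\mathcal U_{\mathsf e}=(\{\mathsf v_1\}\times[n],\dots,\{\mathsf v_k\}\times[n])$. A restriction sequence is $\boldsymbol\zeta=(\mathbf z^{(\mathsf e,j)})_{(\mathsf e,j)\in\mathcal E\times[K]}$, each $\mathbf z^{(\mathsf e,j)}:\prod\mathcal U_{\mathsf e}\to\mathbb Z_N^k\cup\{\mathtt{nil}\}$ with support $\{e:\mathbf z(e)\ne\mathtt{nil}\}$ a matching of size at most $\alpha n$. $H_{\boldsymbol\zeta}$ is the $k$-uniform hypergraph on $\mathcal V\times[n]$ with edge set $\bigcup\mathrm{supp}\mathbf z^{(\mathsf e,j)}$; $\|\boldsymbol\zeta\|=\sum_i|V_i|^2$ over connected components $V_i$ of $H_{\boldsymbol\zeta}$ with at least two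 vertices. $\boldsymbol\zeta$ is cyclic if the supports are not pairwise disjoint or some $\ell\ge1$ edges of $H_{\boldsymbol\zeta}$ together cover at most $\ell(k-1)$ vertices. $g_{\boldsymbol\zeta}(x)=\prod_{(\mathsf e,j)}\prod_{e\in\mathrm{supp}\mathbf z^{(\mathsf e,j)}}N^k\mu_{\mathsf e}(x_{|e}-\mathbf z^{(\mathsf e,j)}(e))$ for $x\in\mathbb Z_N^{\mathcal V\times[n]}$, where $x_{|e}=(x_{v_1},\dots,x_{v_k})$. Fourier on $\mathbb Z_N^\Lambda$: $\chi_b(x)=\exp(\frac{2\pi\mathrm i}N\sum_vb_vx_v)$, $\widehat f(b)=\mathbb E_x[f(x)\overline{\chi_b(x)}]$, $\|f^{=d}\|_{\mathsf W}=\sum_{b:|\mathrm{supp}b|=d}|\widehat f(b)|$. $F_C(n,d,s^* )=(C\sqrt{n\max\{s^*,d\}}/d)^{d/2}$. $f\ge0$ is $(n,C,s^*,\delta)$-bounded if $|\mathbb E f-1|\le\delta$, $\|f^{=d}\|_{\mathsf W}\le F_C(n,d,s^* )$ for all integers $1\le d\le C^{-2}n$, and $\|f\|_\infty\le2^{s^*}$. *)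

theory Defs
  imports "HOL-Analysis.Analysis" "HOL-Library.FuncSet"
begin

text \<open>Z_N is represented by the natural numbers below N; Z_N^k by lists of length k
  with entries below N.  [n] is rendered as the index set {..<n}.\<close>

definition ZNk :: "nat \<Rightarrow> nat \<Rightarrow> nat list set" where
  "ZNk N k = {t. length t = k \<and> set t \<subseteq> {..<N}}"

definition tsub :: "nat \<Rightarrow> nat list \<Rightarrow> nat list \<Rightarrow> nat list" where
  "tsub N a c = map2 (\<lambda>x y. (x + N - y) mod N) a c"

text \<open>Distribution-labeled k-graph: vertex set V, edge multiset given by a finite index
  set EI with edge map ev (each edge an ordered k-tuple of distinct vertices), and
  one-wise independent pmfs mu e on Z_N^k.\<close>
definition dlk_graph ::
  "nat \<Rightarrow> nat \<Rightarrow> 'v set \<Rightarrow> 'e set \<Rightarrow> ('e \<Rightarrow> 'v list) \<Rightarrow> ('e \<Rightarrow> nat list \<Rightarrow> real) \<Rightarrow> bool" where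
  "dlk_graph N k V EI ev mu \<longleftrightarrow>
     finite V \<and> finite EI \<and>
     (\<forall>e\<in>EI. length (ev e) = k \<and> distinct (ev e) \<and> set (ev e) \<subseteq> V) \<and>
     (\<forall>e\<in>EI. (\<forall>t\<in>ZNk N k. mu e t \<ge> 0) \<and> (\<Sum>t\<in>ZNk N k. mu e t) = 1 \<and>
        (\<forall>i<k. \<forall>a<N. (\<Sum>t\<in>{t\<in>ZNk N k. t ! i = a}. mu e t) = 1 / real N))"

text \<open>An element of prod U_e is encoded by the list of its second coordinates (in [n]);
  the corresponding hyperedge of V x [n] is the set of its k vertices.\<close>
definition Ue :: "nat \<Rightarrow> nat \<Rightarrow> nat list set" where
  "Ue k n = {is. length is = k \<and> set is \<subseteq> {..<n}}"

definition hedge :: "('e \<Rightarrow> 'v list) \<Rightarrow> 'e \<Rightarrow> nat list \<Rightarrow> ('v \<times> nat) set" where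
  "hedge ev e is = set (zip (ev e) is)"

definition supp :: "('e \<Rightarrow> nat \<Rightarrow> nat list \<Rightarrow> nat list option) \<Rightarrow> 'e \<Rightarrow> nat \<Rightarrow> nat list set" where
  "supp z e j = {is. z e j is \<noteq> None}"

text \<open>Restriction sequence for DIHP(G,n,alpha,K); indices (e,j) range over EI x {..<K};
  None plays the role of nil.\<close>
definition restr_seq ::
  "nat \<Rightarrow> nat \<Rightarrow> 'e set \<Rightarrow> ('e \<Rightarrow> 'v list) \<Rightarrow> nat \<Rightarrow> real \<Rightarrow> nat
   \<Rightarrow> ('e \<Rightarrow> nat \<Rightarrow> nat list \<Rightarrow> nat list option) \<Rightarrow> bool" where
  "restr_seq N k EI ev n \<alpha> K z \<longleftrightarrow>
     (\<forall>e\<in>EI. \<forall>j<K.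
        (\<forall>is c. z e j is = Some c \<longrightarrow> is \<in> Ue k n \<and> c \<in> ZNk N k) \<and>
        (\<forall>is\<in>supp z e j. \<forall>is'\<in>supp z e j. is \<noteq> is' \<longrightarrow> hedge ev e is \<inter> hedge ev e is' = {}) \<and>
        real (card (supp z e j)) \<le> \<alpha> * real n)"

definition Hedges ::
  "'e set \<Rightarrow> ('e \<Rightarrow> 'v list) \<Rightarrow> nat \<Rightarrow> ('e \<Rightarrow> nat \<Rightarrow> nat list \<Rightarrow> nat list option) \<Rightarrow> ('v \<times> nat) set set" where
  "Hedges EI ev K z = {hedge ev e is | e j is. e \<in> EI \<and> j < K \<and> is \<in> supp z e j}"

definition cyclic ::
  "nat \<Rightarrow> 'e set \<Rightarrow> ('e \<Rightarrow> 'v list) \<Rightarrow> nat \<Rightarrow> ('e \<Rightarrow> nat \<Rightarrow> nat list \<Rightarrow> nat list option) \<Rightarrow> bool" where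
  "cyclic k EI ev K z \<longleftrightarrow>
     (\<exists>e j e' j' is is'. e \<in> EI \<and> e' \<in> EI \<and> j < K \<and> j' < K \<and> (e, j) \<noteq> (e', j') \<and>
        is \<in> supp z e j \<and> is' \<in> supp z e' j' \<and> hedge ev e is = hedge ev e' is') \<or>
     (\<exists>S. S \<subseteq> Hedges EI ev K z \<and> finite S \<and> S \<noteq> {} \<and>
        real (card (\<Union>S)) \<le> real (card S) * (real k - 1))"

definition Hcomp ::
  "'v set \<Rightarrow> nat \<Rightarrow> ('v \<times> nat) set set \<Rightarrow> ('v \<times> nat) \<Rightarrow> ('v \<times> nat) set" where
  "Hcomp V n HE x = {y \<in> V \<times> {..<n}. (x, y) \<in> {(u, w). \<exists>h\<in>HE. u \<in> h \<and> w \<in> h}\<^sup>*}"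

definition znorm ::
  "'v set \<Rightarrow> 'e set \<Rightarrow> ('e \<Rightarrow> 'v list) \<Rightarrow> nat \<Rightarrow> nat \<Rightarrow> ('e \<Rightarrow> nat \<Rightarrow> nat list \<Rightarrow> nat list option) \<Rightarrow> nat" where
  "znorm V EI ev n K z =
     (\<Sum>C\<in>{C \<in> Hcomp V n (Hedges EI ev K z) ` (V \<times> {..<n}). card C \<ge> 2}. card C ^ 2)"

definition gz ::
  "nat \<Rightarrow> nat \<Rightarrow> 'e set \<Rightarrow> ('e \<Rightarrow> 'v list) \<Rightarrow> ('e \<Rightarrow> nat list \<Rightarrow> real) \<Rightarrow> nat
   \<Rightarrow> ('e \<Rightarrow> nat \<Rightarrow> nat list \<Rightarrow> nat list option) \<Rightarrow> ('v \<times> nat \<Rightarrow> nat) \<Rightarrow> real" where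
  "gz N k EI ev mu K z x =
     (\<Prod>e\<in>EI. \<Prod>j\<in>{..<K}. \<Prod>is\<in>supp z e j.
        real N ^ k * mu e (tsub N (map x (zip (ev e) is)) (the (z e j is))))"

definition ZNdom :: "nat \<Rightarrow> 'a set \<Rightarrow> ('a \<Rightarrow> nat) set" where
  "ZNdom N L = (PiE L (\<lambda>_. {..<N}))"

definition chi :: "nat \<Rightarrow> 'a set \<Rightarrow> ('a \<Rightarrow> nat) \<Rightarrow> ('a \<Rightarrow> nat) \<Rightarrow> complex" where
  "chi N L b x = exp (2 * of_real pi * \<i> / of_nat N * of_nat (\<Sum>v\<in>L. b v * x v))"

definition fhat :: "nat \<Rightarrow> 'a set \<Rightarrow> (('a \<Rightarrow> nat) \<Rightarrow> real) \<Rightarrow> ('a \<Rightarrow> nat) \<Rightarrow> complex" where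
  "fhat N L f b = (\<Sum>x\<in>ZNdom N L. of_real (f x) * cnj (chi N L b x)) / of_nat (card (ZNdom N L))"

definition expect :: "nat \<Rightarrow> 'a set \<Rightarrow> (('a \<Rightarrow> nat) \<Rightarrow> real) \<Rightarrow> real" where
  "expect N L f = (\<Sum>x\<in>ZNdom N L. f x) / real (card (ZNdom N L))"

definition walsh_level :: "nat \<Rightarrow> 'a set \<Rightarrow> (('a \<Rightarrow> nat) \<Rightarrow> real) \<Rightarrow> nat \<Rightarrow> real" where
  "walsh_level N L f d = (\<Sum>b\<in>{b \<in> ZNdom N L. card {v \<in> L. b v \<noteq> 0} = d}. cmod (fhat N L f b))"

definition FC :: "real \<Rightarrow> nat \<Rightarrow> nat \<Rightarrow> real \<Rightarrow> real" where
  "FC C n d s = (C * sqrt (real n * max s (real d)) / real d) powr (real d / 2)"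

definition bounded_fn ::
  "nat \<Rightarrow> 'a set \<Rightarrow> nat \<Rightarrow> real \<Rightarrow> real \<Rightarrow> real \<Rightarrow> (('a \<Rightarrow> nat) \<Rightarrow> real) \<Rightarrow> bool" where
  "bounded_fn N L n C s \<delta> f \<longleftrightarrow>
     (\<forall>x\<in>ZNdom N L. f x \<ge> 0) \<and>
     \<bar>expect N L f - 1\<bar> \<le> \<delta> \<and>
     (\<forall>d::nat. 1 \<le> d \<and> real d \<le> real n / C\<^sup>2 \<longrightarrow> walsh_level N L f d \<le> FC C n d s) \<and>
     (\<forall>x\<in>ZNdom N L. \<bar>f x\<bar> \<le> 2 powr s)"

end

theory Submission
  imports Defs
begin

(* Because the restriction sequence is not cyclic, the hypergraph H of its restricted edges is a
   hyperforest: every nonempty family of its edges contains a leaf, an edge meeting the others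
   (and a fixed root vertex w) in at most one vertex.  The function g is a product of one factor
   N^k mu_e(x_e - c) per edge, and one-wise uniformity of mu_e makes such a factor average to 1
   over all but one of its coordinates.  Integrating out leaves one at a time therefore gives
   E g = 1, and it shows that the Fourier coefficient of g at b vanishes as soon as some connected
   component C of H contains exactly one vertex w with b_w <> 0: after peeling every edge meeting C
   towards w, the integrand no longer depends on x_w, and summing the character over x_w gives a
   full sum of roots of unity.  All other coefficients have modulus at most 1, so for every R > 0
   the level-d Walsh mass is at most R^-d times the sum of R^|b| over the surviving b; this sum
   factorises over the components and is at most exp(((N-1) R)^2 ||zeta||), and the optimal choice
   of R gives the bound F_C.  Finally each factor is at most N^(k-1), and a hyperforest has at most
   ||zeta|| / (k-1) edges, which gives the sup bound. *)

section \<open>Integrating out coordinates\<close>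

definition glue :: "'a set \<Rightarrow> ('a \<Rightarrow> nat) \<Rightarrow> ('a \<Rightarrow> nat) \<Rightarrow> 'a \<Rightarrow> nat" where
  "glue P y x = (\<lambda>v. if v \<in> P then y v else x v)"

definition depends_only :: "nat \<Rightarrow> 'a set \<Rightarrow> 'a set \<Rightarrow> (('a \<Rightarrow> nat) \<Rightarrow> 'c) \<Rightarrow> bool" where
  "depends_only N L D h \<longleftrightarrow>
     (\<forall>x\<in>ZNdom N L. \<forall>y\<in>ZNdom N L. (\<forall>v\<in>D. x v = y v) \<longrightarrow> h x = h y)"

definition unit_marginal :: "nat \<Rightarrow> 'a set \<Rightarrow> 'a set \<Rightarrow> (('a \<Rightarrow> nat) \<Rightarrow> real) \<Rightarrow> bool" where
  "unit_marginal N L P F \<longleftrightarrow>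
     (\<forall>x\<in>ZNdom N (L - P). (\<Sum>y\<in>ZNdom N P. F (glue P y x)) = real N ^ card P)"

lemma finite_ZNdom: "finite L \<Longrightarrow> finite (ZNdom N L)"
  by (simp add: ZNdom_def finite_PiE)

lemma card_ZNdom: "finite L \<Longrightarrow> card (ZNdom N L) = N ^ card L"
  by (simp add: ZNdom_def card_PiE)

lemma glue_in_ZNdom:
  assumes "x \<in> ZNdom N (L - P)" "y \<in> ZNdom N P" "P \<subseteq> L"
  shows "glue P y x \<in> ZNdom N L"
  using assms unfolding ZNdom_def glue_def PiE_def extensional_def by auto

lemma glue_restrict:
  assumes "x \<in> ZNdom N L" "P \<subseteq> L"
  shows "glue P (restrict x P) (restrict x (L - P)) = x"
  using assms by (auto simp: fun_eq_iff glue_def ZNdom_def PiE_def extensional_def)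

lemma restrict_glue:
  assumes "x \<in> ZNdom N (L - P)" "y \<in> ZNdom N P"
  shows "restrict (glue P y x) (L - P) = x" "restrict (glue P y x) P = y"
  using assms by (auto simp: fun_eq_iff glue_def ZNdom_def PiE_def extensional_def)

lemma restrict_in_ZNdom: "x \<in> ZNdom N L \<Longrightarrow> P \<subseteq> L \<Longrightarrow> restrict x P \<in> ZNdom N P"
  by (auto simp: ZNdom_def PiE_def Pi_def)

lemma sum_ZNdom_glue:
  assumes "P \<subseteq> L"
  shows "(\<Sum>x\<in>ZNdom N L. f x) = (\<Sum>x\<in>ZNdom N (L - P). \<Sum>y\<in>ZNdom N P. f (glue P y x))"
proof -
  have "(\<Sum>x\<in>ZNdom N L. f x) = (\<Sum>(x, y)\<in>ZNdom N (L - P) \<times> ZNdom N P. f (glue P y x))"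
    by (rule sum.reindex_bij_witness[of _ "\<lambda>(x, y). glue P y x" "\<lambda>x. (restrict x (L - P), restrict x P)"])
      (use assms in \<open>auto simp: glue_restrict restrict_glue glue_in_ZNdom restrict_in_ZNdom\<close>)
  then show ?thesis
    by (simp add: sum.cartesian_product)
qed

lemma depends_only_mono: "depends_only N L D h \<Longrightarrow> D \<subseteq> D' \<Longrightarrow> depends_only N L D' h"
  unfolding depends_only_def by blast

lemma depends_only_comp: "depends_only N L D h \<Longrightarrow> depends_only N L D (\<lambda>x. \<phi> (h x))"
  unfolding depends_only_def by metis

lemma depends_only_mult:
  "depends_only N L D f \<Longrightarrow> depends_only N L D g \<Longrightarrow> depends_only N L D (\<lambda>x. f x * g x)"
  unfolding depends_only_def by metis

lemma depends_only_prod: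
  "(\<And>t. t \<in> S \<Longrightarrow> depends_only N L D (F t)) \<Longrightarrow> depends_only N L D (\<lambda>x. \<Prod>t\<in>S. F t x)"
  unfolding depends_only_def by (blast intro: prod.cong)

lemma depends_only_glue:
  assumes "depends_only N L (L - P) h" "P \<subseteq> L"
    and "x \<in> ZNdom N (L - P)" "y \<in> ZNdom N P" "y' \<in> ZNdom N P"
  shows "h (glue P y x) = h (glue P y' x)"
  using assms glue_in_ZNdom[of x N L P] unfolding depends_only_def by (simp add: glue_def)

lemma sum_unit_marginal_mult:
  fixes R :: "('a \<Rightarrow> nat) \<Rightarrow> complex"
  assumes L: "finite L" and PL: "P \<subseteq> L" and N: "N \<ge> 1"
    and F: "unit_marginal N L P F" and R: "depends_only N L (L - P) R"
  shows "(\<Sum>x\<in>ZNdom N L. of_real (F x) * R x) = (\<Sum>x\<in>ZNdom N L. R x)"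
proof -
  define y0 where "y0 = (\<lambda>v\<in>P. 0::nat)"
  have y0: "y0 \<in> ZNdom N P"
    using N by (auto simp: y0_def ZNdom_def)
  have "(\<Sum>y\<in>ZNdom N P. of_real (F (glue P y x)) * R (glue P y x))
      = (\<Sum>y\<in>ZNdom N P. R (glue P y x))" if x: "x \<in> ZNdom N (L - P)" for x
  proof -
    have R_const: "R (glue P y x) = R (glue P y0 x)" if "y \<in> ZNdom N P" for y
      using depends_only_glue[OF R PL x that y0] .
    have "(\<Sum>y\<in>ZNdom N P. of_real (F (glue P y x)) * R (glue P y x))
        = of_real (\<Sum>y\<in>ZNdom N P. F (glue P y x)) * R (glue P y0 x)"
      by (simp add: R_const sum_distrib_right)
    also have "\<dots> = of_nat (card (ZNdom N P)) * R (glue P y0 x)"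
      using F x finite_subset[OF PL L] by (simp add: unit_marginal_def card_ZNdom)
    also have "\<dots> = (\<Sum>y\<in>ZNdom N P. R (glue P y x))"
      by (simp add: R_const)
    finally show ?thesis .
  qed
  then show ?thesis
    by (simp add: sum_ZNdom_glue[OF PL])
qed

(* The root w counts as shared, so peeling a leaf never integrates out the coordinate w. *)
definition leaf_peelable :: "('t \<Rightarrow> 'a set) \<Rightarrow> 'a \<Rightarrow> 't set \<Rightarrow> bool" where
  "leaf_peelable Vt w S \<longleftrightarrow>
     (\<forall>S'\<subseteq>S. S' \<noteq> {} \<longrightarrow> (\<exists>t\<in>S'. card (Vt t \<inter> (\<Union>(Vt ` (S' - {t})) \<union> {w})) \<le> 1))"

lemma leaf_peelable_subset: "leaf_peelable Vt w S \<Longrightarrow> S' \<subseteq> S \<Longrightarrow> leaf_peelable Vt w S'"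
  unfolding leaf_peelable_def by blast

lemma card_Int_le_1_obtain_anchor:
  assumes "finite A" "card (A \<inter> B) \<le> 1"
  obtains p where "p \<in> A \<or> A = {}" "A \<inter> B \<subseteq> {p}"
proof (cases "A \<inter> B = {}")
  case True
  then show ?thesis
    using that by blast
next
  case False
  then obtain q where "A \<inter> B = {q}"
    using assms by (metis card_1_singletonE card_0_eq finite_Int le_antisym less_one not_le)
  then show ?thesis
    using that by blast
qed

(* Only the leaf t depends on the coordinates of Vt t other than its anchor p, so they can be
   integrated out against the unit marginal of F t. *)
lemma sum_prod_mult_remove_leaf:
  fixes F :: "'t \<Rightarrow> ('a \<Rightarrow> nat) \<Rightarrow> real" and h :: "('a \<Rightarrow> nat) \<Rightarrow> complex"
  assumes L: "finite L" and N: "N \<ge> 1" and S: "finite S" and t: "t \<in> S"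
    and sub: "\<And>s. s \<in> S \<Longrightarrow> Vt s \<subseteq> L"
    and dep: "\<And>s. s \<in> S \<Longrightarrow> depends_only N L (Vt s) (F s)"
    and marg: "unit_marginal N L (Vt t - {p}) (F t)"
    and anchor: "Vt t \<inter> (\<Union>(Vt ` (S - {t})) \<union> {w}) \<subseteq> {p}"
    and h: "depends_only N L (L - (\<Union>(Vt ` S) - {w})) h"
  shows "(\<Sum>x\<in>ZNdom N L. of_real (\<Prod>s\<in>S. F s x) * h x)
       = (\<Sum>x\<in>ZNdom N L. of_real (\<Prod>s\<in>S - {t}. F s x) * h x)"
proof -
  define P where "P = Vt t - {p}"
  have PL: "P \<subseteq> L"
    using sub[OF t] by (auto simp: P_def)
  have "depends_only N L (L - P) (F s)" if s: "s \<in> S - {t}" for s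
  proof (rule depends_only_mono[OF dep])
    show "s \<in> S"
      using s by blast
    show "Vt s \<subseteq> L - P"
      using s anchor sub[of s] unfolding P_def by blast
  qed
  then have "depends_only N L (L - P) (\<lambda>x. \<Prod>s\<in>S - {t}. F s x)"
    by (rule depends_only_prod)
  moreover have "depends_only N L (L - P) h"
    by (rule depends_only_mono[OF h]) (use t anchor in \<open>auto simp: P_def\<close>)
  ultimately have R: "depends_only N L (L - P) (\<lambda>x. of_real (\<Prod>s\<in>S - {t}. F s x) * h x)"
    by (rule depends_only_mult[OF depends_only_comp])
  have "(\<Sum>x\<in>ZNdom N L. of_real (\<Prod>s\<in>S. F s x) * h x)
      = (\<Sum>x\<in>ZNdom N L. of_real (F t x) * (of_real (\<Prod>s\<in>S - {t}. F s x) * h x))"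
    using t S by (intro sum.cong) (auto simp: prod.remove)
  also have "\<dots> = (\<Sum>x\<in>ZNdom N L. of_real (\<Prod>s\<in>S - {t}. F s x) * h x)"
    using sum_unit_marginal_mult[OF L PL N _ R] marg unfolding P_def by blast
  finally show ?thesis .
qed

lemma sum_prod_unit_marginals_mult:
  fixes F :: "'t \<Rightarrow> ('a \<Rightarrow> nat) \<Rightarrow> real" and h :: "('a \<Rightarrow> nat) \<Rightarrow> complex"
  assumes L: "finite L" and N: "N \<ge> 1" and S: "finite S"
    and sub: "\<And>t. t \<in> S \<Longrightarrow> Vt t \<subseteq> L"
    and dep: "\<And>t. t \<in> S \<Longrightarrow> depends_only N L (Vt t) (F t)"
    and marg: "\<And>t p. t \<in> S \<Longrightarrow> p \<in> Vt t \<or> Vt t = {} \<Longrightarrow> unit_marginal N L (Vt t - {p}) (F t)"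
    and leaves: "leaf_peelable Vt w S"
    and h: "depends_only N L (L - (\<Union>(Vt ` S) - {w})) h"
  shows "(\<Sum>x\<in>ZNdom N L. of_real (\<Prod>t\<in>S. F t x) * h x) = (\<Sum>x\<in>ZNdom N L. h x)"
  using S sub dep marg leaves h
proof (induction S arbitrary: h rule: finite_psubset_induct)
  case (psubset S)
  note sub = psubset.prems(1) and dep = psubset.prems(2) and marg = psubset.prems(3)
    and leaves = psubset.prems(4) and h = psubset.prems(5)
  show ?case
  proof (cases "S = {}")
    case True
    then show ?thesis by simp
  next
    case False
    then obtain t where t: "t \<in> S" and leaf: "card (Vt t \<inter> (\<Union>(Vt ` (S - {t})) \<union> {w})) \<le> 1"
      using leaves unfolding leaf_peelable_def by blast
    obtain p where p: "p \<in> Vt t \<or> Vt t = {}" and anchor: "Vt t \<inter> (\<Union>(Vt ` (S - {t})) \<union> {w}) \<subseteq> {p}"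
      using card_Int_le_1_obtain_anchor[OF finite_subset[OF sub[OF t] L] leaf] by blast
    have "(\<Sum>x\<in>ZNdom N L. of_real (\<Prod>s\<in>S. F s x) * h x)
        = (\<Sum>x\<in>ZNdom N L. of_real (\<Prod>s\<in>S - {t}. F s x) * h x)"
      using sum_prod_mult_remove_leaf[OF L N psubset.hyps t sub dep marg[OF t p] anchor h] by blast
    also have "\<dots> = (\<Sum>x\<in>ZNdom N L. h x)"
    proof (rule psubset.IH)
      show "leaf_peelable Vt w (S - {t})"
        using leaves by (rule leaf_peelable_subset) blast
      show "depends_only N L (L - (\<Union>(Vt ` (S - {t})) - {w})) h"
        by (rule depends_only_mono[OF h]) auto
      show "S - {t} \<subset> S"
        using t by blast
    qed (use sub dep marg in auto)
    finally show ?thesis .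
  qed
qed

section \<open>Leaves of uniform hyperforests\<close>

lemma sum_card_Int_eq_sum_degree:
  assumes "finite HS" "finite A"
  shows "(\<Sum>h\<in>HS. card (h \<inter> A)) = (\<Sum>x\<in>A. card {h\<in>HS. x \<in> h})"
proof -
  have "(\<Sum>h\<in>HS. card (h \<inter> A)) = (\<Sum>h\<in>HS. \<Sum>x\<in>A. if x \<in> h then 1 else 0)"
    using assms(2) by (simp add: sum.If_cases Int_commute)
  also have "\<dots> = (\<Sum>x\<in>A. \<Sum>h\<in>HS. if x \<in> h then 1 else 0)"
    by (rule sum.swap)
  also have "\<dots> = (\<Sum>x\<in>A. card {h\<in>HS. x \<in> h})"
    using assms(1) by (simp add: sum.If_cases Int_def)
  finally show ?thesis .
qed

lemma Int_Union_others_eq: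
  assumes fin: "finite HS" and h: "h \<in> HS"
  shows "h \<inter> (\<Union>(HS - {h}) \<union> {w}) = h \<inter> {x. 2 \<le> card {h'\<in>HS. x \<in> h'} \<or> x = w}"
proof -
  have "x \<in> \<Union>(HS - {h}) \<longleftrightarrow> 2 \<le> card {h'\<in>HS. x \<in> h'}" if x: "x \<in> h" for x
  proof -
    define E where "E = {h'\<in>HS. x \<in> h'} - {h}"
    have "card E = card {h'\<in>HS. x \<in> h'} - 1"
      using h x by (simp add: E_def card_Diff_singleton)
    moreover have "x \<in> \<Union>(HS - {h}) \<longleftrightarrow> card E \<noteq> 0"
      using fin by (auto simp: E_def card_0_eq)
    ultimately show ?thesis
      by arith
  qed
  then show ?thesis
    by auto
qed

lemma sum_card_Int_Union_others_le:
  fixes HS :: "'a set set"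
  assumes fin: "finite HS" and uniform: "\<And>h. h \<in> HS \<Longrightarrow> finite h \<and> card h = k"
  shows "real (\<Sum>h\<in>HS. card (h \<inter> (\<Union>(HS - {h}) \<union> {w})))
      \<le> 2 * (real k * real (card HS) - real (card (\<Union>HS))) + 1"
proof -
  define U where "U = \<Union>HS"
  define deg where "deg x = card {h\<in>HS. x \<in> h}" for x
  define D where "D = {x\<in>U. 2 \<le> deg x \<or> x = w}"
  have fU: "finite U"
    using fin uniform by (auto simp: U_def)
  have deg_pos: "1 \<le> deg x" if "x \<in> U" for x
    using that fin by (auto simp: U_def deg_def Suc_le_eq card_gt_0_iff)
  have "h \<inter> (\<Union>(HS - {h}) \<union> {w}) = h \<inter> D" if "h \<in> HS" for h
    using Int_Union_others_eq[OF fin that, of w] that by (auto simp: D_def U_def deg_def)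
  then have "(\<Sum>h\<in>HS. card (h \<inter> (\<Union>(HS - {h}) \<union> {w}))) = (\<Sum>h\<in>HS. card (h \<inter> D))"
    by simp
  also have "\<dots> = (\<Sum>x\<in>D. deg x)"
    using sum_card_Int_eq_sum_degree[OF fin, of D] fU by (simp add: D_def deg_def)
  finally have "real (\<Sum>h\<in>HS. card (h \<inter> (\<Union>(HS - {h}) \<union> {w}))) = (\<Sum>x\<in>U. if x \<in> D then real (deg x) else 0)"
    using fU by (simp add: sum.If_cases D_def Int_def)
  also have "\<dots> \<le> (\<Sum>x\<in>U. 2 * (real (deg x) - 1) + (if x = w then 1 else 0))"
    by (intro sum_mono) (use deg_pos in \<open>force simp: D_def\<close>)
  also have "\<dots> \<le> 2 * (real k * real (card HS) - real (card U)) + 1"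
  proof -
    have "(\<Sum>x\<in>U. real (deg x)) = real k * real (card HS)"
      using sum_card_Int_eq_sum_degree[OF fin fU] uniform
      by (simp add: deg_def U_def Int_absorb2 Union_upper mult.commute flip: of_nat_sum of_nat_mult)
    moreover have "(\<Sum>x\<in>U. if x = w then 1 else 0 :: real) \<le> 1"
      using fU by (simp add: sum.If_cases)
    ultimately show ?thesis
      by (simp add: sum.distrib sum_subtractf flip: sum_distrib_left)
  qed
  finally show ?thesis
    by (simp add: U_def)
qed

lemma exists_edge_meeting_rest_at_most_once:
  fixes HS :: "'a set set"
  assumes fin: "finite HS" and uniform: "\<And>h. h \<in> HS \<Longrightarrow> finite h \<and> card h = k"
    and many_vertices: "\<not> real (card (\<Union>HS)) \<le> real (card HS) * (real k - 1)"
  shows "\<exists>h\<in>HS. card (h \<inter> (\<Union>(HS - {h}) \<union> {w})) \<le> 1"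
proof (rule ccontr)
  assume "\<not> ?thesis"
  then have "2 * card HS \<le> (\<Sum>h\<in>HS. card (h \<inter> (\<Union>(HS - {h}) \<union> {w})))"
    using sum_mono[of HS "\<lambda>_. 2" "\<lambda>h. card (h \<inter> (\<Union>(HS - {h}) \<union> {w}))"] by (force simp: mult.commute)
  then have "real (2 * card HS) \<le> real (\<Sum>h\<in>HS. card (h \<inter> (\<Union>(HS - {h}) \<union> {w})))"
    by (simp only: of_nat_le_iff)
  also have "\<dots> \<le> 2 * (real k * real (card HS) - real (card (\<Union>HS))) + 1"
    by (rule sum_card_Int_Union_others_le[OF fin uniform])
  finally have "real (2 * (card HS + card (\<Union>HS))) \<le> real (1 + 2 * (k * card HS))"
    by (simp add: algebra_simps)
  moreover have "real (k * card HS) < real (card HS + card (\<Union>HS))"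
    using many_vertices by (simp add: algebra_simps)
  ultimately show False
    by (simp only: of_nat_le_iff of_nat_less_iff) arith
qed

section \<open>Marginals of an edge factor\<close>

lemma ZNk_iff: "t \<in> ZNk N k \<longleftrightarrow> length t = k \<and> (\<forall>j<k. t ! j < N)"
  by (auto simp: ZNk_def subset_iff in_set_conv_nth)

lemma finite_ZNk: "finite (ZNk N k)"
  using finite_lists_length_eq[of "{..<N}" k] by (simp add: ZNk_def conj_commute)

lemma tsub_in_ZNk: "N \<ge> 1 \<Longrightarrow> length a = k \<Longrightarrow> c \<in> ZNk N k \<Longrightarrow> tsub N a c \<in> ZNk N k"
  by (auto simp: ZNk_iff tsub_def)

lemma sum_ZNdom_map_glue:
  fixes f :: "nat list \<Rightarrow> 'c::comm_monoid_add"
  assumes dist: "distinct vs" and i: "i < length vs" and vsL: "set vs \<subseteq> L"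
    and P: "P = set vs - {vs ! i}" and x: "x \<in> ZNdom N (L - P)"
  shows "(\<Sum>y\<in>ZNdom N P. f (map (glue P y x) vs))
       = (\<Sum>t\<in>{t\<in>ZNk N (length vs). t ! i = x (vs ! i)}. f t)"
proof -
  have PL: "P \<subseteq> L"
    using vsL P by blast
  have in_P: "vs ! j \<in> P \<longleftrightarrow> j \<noteq> i" if "j < length vs" for j
    using that i dist P by (auto simp: nth_eq_iff_index_eq)
  let ?coords = "\<lambda>t. \<lambda>v\<in>P. the (map_of (zip vs t) v)"
  show ?thesis
  proof (rule sum.reindex_bij_witness[of _ ?coords "\<lambda>y. map (glue P y x) vs"])
    fix y assume y: "y \<in> ZNdom N P"
    show "?coords (map (glue P y x) vs) = y"
      using y P by (auto simp: fun_eq_iff map_of_zip_map glue_def ZNdom_def PiE_def extensional_def)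
    have "glue P y x (vs ! j) < N" if "j < length vs" for j
      using glue_in_ZNdom[OF x y PL] vsL nth_mem[OF that] by (auto simp: ZNdom_def)
    moreover have "glue P y x (vs ! i) = x (vs ! i)"
      using in_P[OF i] by (simp add: glue_def)
    ultimately show "map (glue P y x) vs \<in> {t\<in>ZNk N (length vs). t ! i = x (vs ! i)}"
      using vsL i by (auto simp: ZNk_iff)
  next
    fix t assume t: "t \<in> {t\<in>ZNk N (length vs). t ! i = x (vs ! i)}"
    then have len: "length t = length vs" and tN: "\<forall>j<length vs. t ! j < N" and ti: "t ! i = x (vs ! i)"
      by (auto simp: ZNk_iff)
    have lookup: "the (map_of (zip vs t) (vs ! j)) = t ! j" if "j < length vs" for j
      using map_of_zip_nth[of vs t j] len dist that by simp
    show "map (glue P (?coords t) x) vs = t"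
    proof (rule nth_equalityI)
      fix j assume "j < length (map (glue P (?coords t) x) vs)"
      then have j: "j < length vs"
        by simp
      show "map (glue P (?coords t) x) vs ! j = t ! j"
        using j in_P[OF j] lookup[OF j] ti by (auto simp: glue_def)
    qed (simp add: len)
    have "the (map_of (zip vs t) v) < N" if v: "v \<in> P" for v
    proof -
      obtain j where "j < length vs" "v = vs ! j"
        using v P by (auto simp: in_set_conv_nth)
      then show ?thesis
        using lookup tN by simp
    qed
    then show "?coords t \<in> ZNdom N P"
      by (auto simp: ZNdom_def)
  qed simp
qed

lemma mod_diff_add_cancel: "u < N \<Longrightarrow> c < N \<Longrightarrow> ((u + N - c) mod N + c) mod N = (u::nat)"
  by (simp add: mod_add_left_eq less_imp_le_nat)

lemma mod_add_diff_cancel: "u < N \<Longrightarrow> c < N \<Longrightarrow> ((u + c) mod N + N - c) mod N = (u::nat)"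
  by (cases "u + c < N") (simp_all add: mod_if)

lemma sum_fiber_tsub:
  assumes c: "c \<in> ZNk N k" and i: "i < k" and a: "a < N"
  shows "(\<Sum>t\<in>{t\<in>ZNk N k. t ! i = a}. M (tsub N t c))
       = (\<Sum>t\<in>{t\<in>ZNk N k. t ! i = (a + N - c ! i) mod N}. M t)"
proof (rule sum.reindex_bij_witness[of _ "\<lambda>s. map2 (\<lambda>u v. (u + v) mod N) s c" "\<lambda>t. tsub N t c"])
  have cN: "\<forall>j<k. c ! j < N" and lc: "length c = k"
    using c by (auto simp: ZNk_iff)
  fix t assume t: "t \<in> {t\<in>ZNk N k. t ! i = a}"
  then have "\<forall>j<k. t ! j < N" and lt: "length t = k"
    by (auto simp: ZNk_iff)
  then show "map2 (\<lambda>u v. (u + v) mod N) (tsub N t c) c = t"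
    using lc cN by (intro nth_equalityI) (auto simp: tsub_def mod_diff_add_cancel)
  show "tsub N t c \<in> {t\<in>ZNk N k. t ! i = (a + N - c ! i) mod N}"
    using t lt lc i a by (auto simp: ZNk_iff tsub_def)
next
  have cN: "\<forall>j<k. c ! j < N" and lc: "length c = k"
    using c by (auto simp: ZNk_iff)
  fix s assume s: "s \<in> {t\<in>ZNk N k. t ! i = (a + N - c ! i) mod N}"
  then have "\<forall>j<k. s ! j < N" and ls: "length s = k"
    by (auto simp: ZNk_iff)
  then show "tsub N (map2 (\<lambda>u v. (u + v) mod N) s c) c = s"
    using lc cN by (intro nth_equalityI) (auto simp: tsub_def mod_add_diff_cancel)
  have "(s ! i + c ! i) mod N = a"
    using s a cN i by (simp add: mod_diff_add_cancel)
  then show "map2 (\<lambda>u v. (u + v) mod N) s c \<in> {t\<in>ZNk N k. t ! i = a}"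
    using ls lc i a by (auto simp: ZNk_iff)
qed simp

lemma unit_marginal_edge_factor:
  fixes M :: "nat list \<Rightarrow> real"
  assumes N: "N \<ge> 1" and dist: "distinct vs" and vsL: "set vs \<subseteq> L" and c: "c \<in> ZNk N (length vs)"
    and total: "(\<Sum>t\<in>ZNk N (length vs). M t) = 1"
    and one_wise: "\<And>i a. i < length vs \<Longrightarrow> a < N \<Longrightarrow>
                     (\<Sum>t\<in>{t\<in>ZNk N (length vs). t ! i = a}. M t) = 1 / real N"
    and p: "p \<in> set vs \<or> vs = []"
  shows "unit_marginal N L (set vs - {p}) (\<lambda>x. real N ^ length vs * M (tsub N (map x vs) c))"
proof (cases "vs = []")
  case True
  have "ZNk N 0 = {[]}"
    by (auto simp: ZNk_def)
  then show ?thesis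
    using True c total by (simp add: unit_marginal_def ZNdom_def tsub_def)
next
  case False
  then obtain i where i: "i < length vs" and pi: "p = vs ! i"
    using p by (auto simp: in_set_conv_nth)
  define P where "P = set vs - {p}"
  have cardP: "card P = length vs - 1"
    using dist i pi by (simp add: P_def distinct_card)
  show ?thesis
    unfolding unit_marginal_def P_def[symmetric]
  proof
    fix x assume x: "x \<in> ZNdom N (L - P)"
    have "p \<in> L - P"
      using vsL i pi by (auto simp: P_def)
    then have "x p < N"
      using x by (auto simp: ZNdom_def)
    have "(\<Sum>y\<in>ZNdom N P. real N ^ length vs * M (tsub N (map (glue P y x) vs) c))
        = real N ^ length vs * (\<Sum>t\<in>{t\<in>ZNk N (length vs). t ! i = x p}. M (tsub N t c))"
      using sum_ZNdom_map_glue[OF dist i vsL _ x] by (simp add: P_def pi sum_distrib_left)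
    also have "\<dots> = real N ^ length vs / real N"
      using sum_fiber_tsub[OF c i \<open>x p < N\<close>, of M] one_wise[OF i] N by simp
    also have "\<dots> = real N ^ card P"
      using N i by (simp add: cardP power_diff)
    finally show "(\<Sum>y\<in>ZNdom N P. real N ^ length vs * M (tsub N (map (glue P y x) vs) c)) = real N ^ card P" .
  qed
qed

lemma le_inverse_if_uniform_marginal:
  fixes M :: "nat list \<Rightarrow> real"
  assumes nonneg: "\<And>t. t \<in> ZNk N k \<Longrightarrow> 0 \<le> M t" and i: "i < k"
    and marginal: "\<And>a. a < N \<Longrightarrow> (\<Sum>t\<in>{t\<in>ZNk N k. t ! i = a}. M t) = 1 / real N"
    and s: "s \<in> ZNk N k"
  shows "M s \<le> 1 / real N"
proof -
  have "M s \<le> (\<Sum>t\<in>{t\<in>ZNk N k. t ! i = s ! i}. M t)"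
    using s nonneg finite_ZNk by (intro member_le_sum) auto
  also have "\<dots> = 1 / real N"
    using s i by (intro marginal) (simp add: ZNk_iff)
  finally show ?thesis .
qed

section \<open>Edges and components of a restriction sequence\<close>

definition restr_edges ::
  "'e set \<Rightarrow> nat \<Rightarrow> ('e \<Rightarrow> nat \<Rightarrow> nat list \<Rightarrow> nat list option) \<Rightarrow> ('e \<times> nat \<times> nat list) set" where
  "restr_edges EI K z = (SIGMA e:EI. SIGMA j:{..<K}. supp z e j)"

definition edge_vertices :: "('e \<Rightarrow> 'v list) \<Rightarrow> 'e \<times> nat \<times> nat list \<Rightarrow> ('v \<times> nat) list" where
  "edge_vertices ev t = (case t of (e, j, is) \<Rightarrow> zip (ev e) is)"

(* A triple (e, j, is) stands for the hyperedge {(v_1, is_1), ..., (v_k, is_k)} in the support of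
   z e j, where ev e = [v_1, ..., v_k]; edge_factor is the factor it contributes to g. *)
definition edge_factor ::
  "nat \<Rightarrow> nat \<Rightarrow> ('e \<Rightarrow> 'v list) \<Rightarrow> ('e \<Rightarrow> nat list \<Rightarrow> real) \<Rightarrow> ('e \<Rightarrow> nat \<Rightarrow> nat list \<Rightarrow> nat list option)
   \<Rightarrow> 'e \<times> nat \<times> nat list \<Rightarrow> ('v \<times> nat \<Rightarrow> nat) \<Rightarrow> real" where
  "edge_factor N k ev mu z t x =
     (case t of (e, j, is) \<Rightarrow> real N ^ k * mu e (tsub N (map x (edge_vertices ev t)) (the (z e j is))))"

lemma mem_restr_edges [simp]: "(e, j, is) \<in> restr_edges EI K z \<longleftrightarrow> e \<in> EI \<and> j < K \<and> is \<in> supp z e j"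
  by (simp add: restr_edges_def)

lemma edge_vertices_simp [simp]: "edge_vertices ev (e, j, is) = zip (ev e) is"
  by (simp add: edge_vertices_def)

lemma Hedges_eq: "Hedges EI ev K z = (\<lambda>t. set (edge_vertices ev t)) ` restr_edges EI K z"
  by (force simp: Hedges_def restr_edges_def hedge_def)

lemma finite_supp:
  assumes "restr_seq N k EI ev n \<alpha> K z" "e \<in> EI" "j < K"
  shows "finite (supp z e j)"
proof (rule finite_subset)
  show "supp z e j \<subseteq> Ue k n"
    using assms unfolding restr_seq_def supp_def by auto
  show "finite (Ue k n)"
    using finite_lists_length_eq[of "{..<n}" k] by (simp add: Ue_def conj_commute)
qed

lemma finite_restr_edges:
  "finite EI \<Longrightarrow> restr_seq N k EI ev n \<alpha> K z \<Longrightarrow> finite (restr_edges EI K z)"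
  unfolding restr_edges_def using finite_supp by (intro finite_SigmaI) auto

lemma gz_eq_prod_edge_factor:
  assumes "finite EI" "restr_seq N k EI ev n \<alpha> K z"
  shows "gz N k EI ev mu K z x = (\<Prod>t\<in>restr_edges EI K z. edge_factor N k ev mu z t x)"
proof -
  let ?f = "\<lambda>e j is. real N ^ k * mu e (tsub N (map x (zip (ev e) is)) (the (z e j is)))"
  have "gz N k EI ev mu K z x = (\<Prod>e\<in>EI. \<Prod>(j, is)\<in>(SIGMA j:{..<K}. supp z e j). ?f e j is)"
    unfolding gz_def using assms finite_supp by (intro prod.cong refl, subst prod.Sigma) auto
  also have "\<dots> = (\<Prod>(e, j, is)\<in>restr_edges EI K z. ?f e j is)"
    unfolding restr_edges_def using assms finite_supp[OF assms(2)]
    by (subst prod.Sigma) (auto simp: split_def)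
  also have "\<dots> = (\<Prod>t\<in>restr_edges EI K z. edge_factor N k ev mu z t x)"
    by (intro prod.cong refl) (auto simp: edge_factor_def)
  finally show ?thesis .
qed

lemma depends_only_edge_factor: "depends_only N L (set (edge_vertices ev t)) (edge_factor N k ev mu z t)"
  unfolding depends_only_def edge_factor_def by (simp add: split_def cong: map_cong)

lemma sym_Hedge_rel: "sym {(u, w). \<exists>h\<in>HE. u \<in> h \<and> w \<in> h}"
  by (auto simp: sym_def)

lemma Hcomp_subset: "Hcomp V n HE x \<subseteq> V \<times> {..<n}"
  by (auto simp: Hcomp_def)

lemma self_in_Hcomp: "x \<in> V \<times> {..<n} \<Longrightarrow> x \<in> Hcomp V n HE x"
  by (simp add: Hcomp_def)

lemma Hcomp_eq_of_mem:
  assumes "y \<in> Hcomp V n HE x"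
  shows "Hcomp V n HE y = Hcomp V n HE x"
proof -
  let ?R = "{(u, w). \<exists>h\<in>HE. u \<in> h \<and> w \<in> h}"
  have xy: "(x, y) \<in> ?R\<^sup>*"
    using assms by (simp add: Hcomp_def)
  moreover have "(y, x) \<in> ?R\<^sup>*"
    using xy sym_rtrancl[OF sym_Hedge_rel[of HE]] unfolding sym_def by blast
  ultimately show ?thesis
    unfolding Hcomp_def by (auto intro: rtrancl_trans)
qed

lemma Hcomp_eq_or_disjoint: "Hcomp V n HE x = Hcomp V n HE y \<or> Hcomp V n HE x \<inter> Hcomp V n HE y = {}"
proof (rule disjCI)
  assume "Hcomp V n HE x \<inter> Hcomp V n HE y \<noteq> {}"
  then obtain u where "u \<in> Hcomp V n HE x" "u \<in> Hcomp V n HE y"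
    by blast
  then show "Hcomp V n HE x = Hcomp V n HE y"
    using Hcomp_eq_of_mem by metis
qed

lemma edge_subset_Hcomp:
  assumes h: "h \<in> HE" "h \<subseteq> V \<times> {..<n}" and u: "u \<in> h" "u \<in> Hcomp V n HE x"
  shows "h \<subseteq> Hcomp V n HE x"
proof
  fix v assume v: "v \<in> h"
  have "(x, u) \<in> {(u, w). \<exists>h\<in>HE. u \<in> h \<and> w \<in> h}\<^sup>*"
    using u by (simp add: Hcomp_def)
  moreover have "(u, v) \<in> {(u, w). \<exists>h\<in>HE. u \<in> h \<and> w \<in> h}"
    using h u v by blast
  ultimately have "(x, v) \<in> {(u, w). \<exists>h\<in>HE. u \<in> h \<and> w \<in> h}\<^sup>*"
    by (rule rtrancl_into_rtrancl)
  with v h(2) show "v \<in> Hcomp V n HE x"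
    unfolding Hcomp_def by blast
qed

lemma Hcomps_partition:
  fixes V :: "'v set" and n :: nat and HE :: "('v \<times> nat) set set"
  assumes "finite V"
  defines "CC \<equiv> Hcomp V n HE ` (V \<times> {..<n})"
  shows "finite CC" "\<And>C. C \<in> CC \<Longrightarrow> finite C" "disjoint CC" "\<Union>CC = V \<times> {..<n}"
proof -
  show "finite CC"
    using assms by simp
  have "finite (V \<times> {..<n})"
    using assms(1) by simp
  then show "finite C" if "C \<in> CC" for C
    using that finite_subset[OF Hcomp_subset] by (auto simp: CC_def)
  show "disjoint CC"
  proof (rule disjointI)
    fix C C' assume "C \<in> CC" "C' \<in> CC" "C \<noteq> C'"
    moreover obtain x y where "C = Hcomp V n HE x" "C' = Hcomp V n HE y"
      using \<open>C \<in> CC\<close> \<open>C' \<in> CC\<close> by (auto simp: CC_def)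
    ultimately show "C \<inter> C' = {}"
      using Hcomp_eq_or_disjoint[of V n HE x y] by auto
  qed
  show "\<Union>CC = V \<times> {..<n}"
  proof
    show "\<Union>CC \<subseteq> V \<times> {..<n}"
      unfolding CC_def using Hcomp_subset by blast
    show "V \<times> {..<n} \<subseteq> \<Union>CC"
      unfolding CC_def using self_in_Hcomp by blast
  qed
qed

section \<open>Character sums\<close>

lemma sum_powers_root_of_unity:
  assumes b: "0 < b" "b < N"
  shows "(\<Sum>a<N. cnj (exp (2 * of_real pi * \<i> / of_nat N * of_nat b)) ^ a) = 0"
proof -
  define q where "q = cnj (exp (2 * of_real pi * \<i> / of_nat N * of_nat b))"
  have q_eq: "q = exp (complex_of_real (- (2 * pi * real b / real N)) * \<i>)"
    by (simp add: q_def exp_cnj mult_ac)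
  have "q ^ N = exp (of_nat N * (complex_of_real (- (2 * pi * real b / real N)) * \<i>))"
    unfolding q_eq by (rule exp_of_nat_mult[symmetric])
  also have "\<dots> = 1"
    using b by (simp add: exp_eq_1) (use mult.commute in \<open>metis of_int_of_nat_eq mult_minus_right of_int_minus\<close>)
  finally have qN: "q ^ N = 1" .
  have "q \<noteq> 1"
  proof
    assume "q = 1"
    then obtain m :: int where "- (2 * pi * real b / real N) = 2 * of_int m * pi"
      by (auto simp: q_eq exp_eq_1)
    then have "2 * pi * (real b / real N) = 2 * pi * of_int (- m)"
      by (simp add: algebra_simps)
    then have "of_int (- m) = real b / real N"
      by (subst (asm) mult_cancel_left) simp
    moreover have "0 < real b / real N" "real b / real N < 1"
      using b by auto
    ultimately show False
      by (metis of_int_0_less_iff of_int_less_1_iff not_less zle_add1_eq_le add_0)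
  qed
  then have "(\<Sum>a<N. q ^ a) = 0"
    using qN by (simp add: sum_gp_strict)
  then show ?thesis
    by (simp only: q_def)
qed

lemma sum_ZNdom_singleton: "(\<Sum>y\<in>ZNdom N {w}. f (y w)) = (\<Sum>a<N. f a)"
  by (rule sum.reindex_bij_witness[of _ "\<lambda>a. \<lambda>v\<in>{w}. a" "\<lambda>y. y w"])
    (auto simp: ZNdom_def PiE_def extensional_def fun_eq_iff)

lemma depends_only_chi: "depends_only N L {v\<in>L. b v \<noteq> 0} (chi N L b)"
  unfolding depends_only_def
proof (intro ballI impI)
  fix x y :: "'a \<Rightarrow> nat" assume "\<forall>v\<in>{v\<in>L. b v \<noteq> 0}. x v = y v"
  then have "(\<Sum>v\<in>L. b v * x v) = (\<Sum>v\<in>L. b v * y v)"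
    by (intro sum.cong) auto
  then show "chi N L b x = chi N L b y"
    by (simp add: chi_def)
qed

lemma chi_glue_singleton:
  fixes N :: nat and \<theta> :: complex
  defines "\<theta> \<equiv> 2 * of_real pi * \<i> / of_nat N"
  assumes L: "finite L" and w: "w \<in> L"
  shows "chi N L b (glue {w} y x)
       = exp (\<theta> * of_nat (\<Sum>v\<in>L - {w}. b v * x v)) * exp (\<theta> * of_nat (b w)) ^ y w"
proof -
  define r where "r = (\<Sum>v\<in>L - {w}. b v * x v)"
  have "(\<Sum>v\<in>L - {w}. b v * glue {w} y x v) = r"
    unfolding r_def glue_def by (intro sum.cong) auto
  then have "(\<Sum>v\<in>L. b v * glue {w} y x v) = b w * y w + r"
    using L w by (simp add: sum.remove glue_def)
  then have "chi N L b (glue {w} y x) = exp (\<theta> * of_nat (b w * y w + r))"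
    by (simp add: chi_def \<theta>_def)
  also have "\<theta> * of_nat (b w * y w + r) = of_nat (y w) * (\<theta> * of_nat (b w)) + \<theta> * of_nat r"
    by (simp add: algebra_simps)
  finally show ?thesis
    by (simp add: exp_add exp_of_nat_mult r_def)
qed

(* With the other coordinates fixed, the sum over x_w is a full sum of N-th roots of unity. *)
lemma sum_mult_cnj_chi_eq_0:
  fixes G :: "('a \<Rightarrow> nat) \<Rightarrow> complex"
  assumes L: "finite L" and w: "w \<in> L" and b: "b \<in> ZNdom N L" and bw: "b w \<noteq> 0"
    and G: "depends_only N L (L - {w}) G"
  shows "(\<Sum>x\<in>ZNdom N L. G x * cnj (chi N L b x)) = 0"
proof -
  define \<theta> :: complex where "\<theta> = 2 * of_real pi * \<i> / of_nat N"
  define q where "q = cnj (exp (\<theta> * of_nat (b w)))"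
  have bwN: "b w < N"
    using b w by (auto simp: ZNdom_def)
  define y0 where "y0 = (\<lambda>v\<in>{w}. 0::nat)"
  have y0: "y0 \<in> ZNdom N {w}"
    using bwN by (auto simp: y0_def ZNdom_def)
  have wL: "{w} \<subseteq> L"
    using w by simp
  have "(\<Sum>y\<in>ZNdom N {w}. G (glue {w} y x) * cnj (chi N L b (glue {w} y x))) = 0"
    if x: "x \<in> ZNdom N (L - {w})" for x
  proof -
    define c where "c = G (glue {w} y0 x) * cnj (exp (\<theta> * of_nat (\<Sum>v\<in>L - {w}. b v * x v)))"
    have "(\<Sum>y\<in>ZNdom N {w}. G (glue {w} y x) * cnj (chi N L b (glue {w} y x)))
        = (\<Sum>y\<in>ZNdom N {w}. c * q ^ y w)"
      using depends_only_glue[OF G wL x _ y0] chi_glue_singleton[OF L w]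
      by (intro sum.cong) (simp_all add: c_def q_def \<theta>_def mult.assoc)
    also have "\<dots> = c * (\<Sum>a<N. q ^ a)"
      by (simp only: sum_distrib_left[symmetric] sum_ZNdom_singleton)
    also have "(\<Sum>a<N. q ^ a) = 0"
      unfolding q_def \<theta>_def using bw bwN by (intro sum_powers_root_of_unity) auto
    finally show ?thesis
      by simp
  qed
  then show ?thesis
    by (simp add: sum_ZNdom_glue[OF wL])
qed

section \<open>Weight enumerators\<close>

definition hamming_weight :: "'a set \<Rightarrow> ('a \<Rightarrow> nat) \<Rightarrow> nat" where
  "hamming_weight C b = card {v \<in> C. b v \<noteq> 0}"

lemma hamming_weight_glue_inside: "hamming_weight C (glue C y x) = hamming_weight C y"
  unfolding hamming_weight_def glue_def by (rule arg_cong[where f = card]) auto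

lemma hamming_weight_glue_outside: "C' \<inter> C = {} \<Longrightarrow> hamming_weight C' (glue C y x) = hamming_weight C' x"
  unfolding hamming_weight_def glue_def by (rule arg_cong[where f = card]) auto

lemma hamming_weight_glue_Un:
  assumes "finite C" "finite U" "C \<inter> U = {}"
  shows "hamming_weight (C \<union> U) (glue C y x) = hamming_weight C y + hamming_weight U x"
proof -
  have "{v \<in> C \<union> U. glue C y x v \<noteq> 0} = {v \<in> C. y v \<noteq> 0} \<union> {v \<in> U. x v \<noteq> 0}"
    using assms(3) by (auto simp: glue_def)
  then show ?thesis
    using assms by (simp add: hamming_weight_def card_Un_disjoint disjoint_iff)
qed

lemma sum_ZNdom_Un_eq_mult:
  fixes a c :: "('a \<Rightarrow> nat) \<Rightarrow> 'c::comm_semiring_0"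
  assumes CU: "C \<inter> U = {}"
    and f: "\<And>x y. x \<in> ZNdom N U \<Longrightarrow> y \<in> ZNdom N C \<Longrightarrow> f (glue C y x) = a y * c x"
  shows "(\<Sum>b\<in>ZNdom N (C \<union> U). f b) = (\<Sum>y\<in>ZNdom N C. a y) * (\<Sum>x\<in>ZNdom N U. c x)"
proof -
  have "C \<union> U - C = U"
    using CU by blast
  then have "(\<Sum>b\<in>ZNdom N (C \<union> U). f b) = (\<Sum>x\<in>ZNdom N U. \<Sum>y\<in>ZNdom N C. a y * c x)"
    using f by (simp add: sum_ZNdom_glue[OF Un_upper1])
  then show ?thesis
    by (simp add: sum_product sum.swap[of _ "ZNdom N U"] mult.commute)
qed

lemma sum_no_weight_1_blocks_eq_prod:
  fixes R :: real and CC :: "'a set set"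
  assumes "finite CC" "\<And>C. C \<in> CC \<Longrightarrow> finite C" "disjoint CC"
  shows "(\<Sum>b\<in>{b\<in>ZNdom N (\<Union>CC). \<forall>C\<in>CC. hamming_weight C b \<noteq> 1}. R ^ hamming_weight (\<Union>CC) b)
       = (\<Prod>C\<in>CC. \<Sum>b\<in>{b\<in>ZNdom N C. hamming_weight C b \<noteq> 1}. R ^ hamming_weight C b)"
  using assms
proof (induction CC rule: finite_induct)
  case empty
  show ?case
    by (simp add: hamming_weight_def card_ZNdom)
next
  case (insert C CC)
  define U where "U = \<Union>CC"
  have fC: "finite C" and fU: "finite U"
    using insert by (auto simp: U_def)
  have CU: "C \<inter> U = {}"
    using insert.hyps(2) insert.prems(2) unfolding U_def disjoint_def by fastforce
  have outside: "C' \<inter> C = {}" if "C' \<in> CC" for C'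
    using that CU by (auto simp: U_def)
  have "(\<Sum>b\<in>ZNdom N (C \<union> U). if \<forall>C'\<in>insert C CC. hamming_weight C' b \<noteq> 1
          then R ^ hamming_weight (C \<union> U) b else 0)
      = (\<Sum>y\<in>ZNdom N C. if hamming_weight C y \<noteq> 1 then R ^ hamming_weight C y else 0)
        * (\<Sum>x\<in>ZNdom N U. if \<forall>C'\<in>CC. hamming_weight C' x \<noteq> 1 then R ^ hamming_weight U x else 0)"
    using outside
    by (intro sum_ZNdom_Un_eq_mult[OF CU]) (simp add: hamming_weight_glue_inside
        hamming_weight_glue_outside hamming_weight_glue_Un[OF fC fU CU] power_add cong: ball_cong)
  then show ?case
    using insert fC fU unfolding U_def by (simp add: sum.inter_filter finite_ZNdom pairwise_insert disjoint_def)
qed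

lemma sum_ZNdom_pow_hamming_weight:
  fixes R :: real
  assumes C: "finite C" and N: "N \<ge> 1"
  shows "(\<Sum>b\<in>ZNdom N C. R ^ hamming_weight C b) = (1 + (real N - 1) * R) ^ card C"
proof -
  have "(\<Sum>b\<in>ZNdom N C. R ^ hamming_weight C b) = (\<Sum>b\<in>ZNdom N C. \<Prod>u\<in>C. if b u \<noteq> 0 then R else 1)"
    using C by (simp add: hamming_weight_def prod.If_cases Int_def)
  also have "\<dots> = (\<Prod>u\<in>C. \<Sum>a<N. if a \<noteq> 0 then R else 1)"
    unfolding ZNdom_def using C by (rule prod_sum_PiE[symmetric]) simp
  also have "(\<Sum>a<N. if a \<noteq> 0 then R else 1) = 1 + (real N - 1) * R"
    using N by (cases N) (simp_all add: sum.lessThan_Suc_shift del: sum.lessThan_Suc)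
  finally show ?thesis
    by simp
qed

lemma card_hamming_weight_1_ge:
  assumes C: "finite C" and N: "N \<ge> 1"
  shows "real (card C) * (real N - 1) \<le> real (card {b\<in>ZNdom N C. hamming_weight C b = 1})"
proof -
  define \<phi> where "\<phi> p = (\<lambda>u\<in>C. if u = fst p then snd p else 0)" for p :: "'a \<times> nat"
  have "inj_on \<phi> (C \<times> {1..<N})"
  proof (rule inj_onI)
    fix p p' assume p: "p \<in> C \<times> {1..<N}" and p': "p' \<in> C \<times> {1..<N}" and eq: "\<phi> p = \<phi> p'"
    have "\<phi> p (fst p) = snd p" "\<phi> p' (fst p) = (if fst p = fst p' then snd p' else 0)"
      using p p' by (auto simp: \<phi>_def)
    then show "p = p'"
      using eq p by (auto simp: prod_eq_iff split: if_splits)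
  qed
  moreover have "\<phi> ` (C \<times> {1..<N}) \<subseteq> {b\<in>ZNdom N C. hamming_weight C b = 1}"
  proof
    fix b assume "b \<in> \<phi> ` (C \<times> {1..<N})"
    then obtain u a where "u \<in> C" "a \<in> {1..<N}" "b = \<phi> (u, a)"
      by auto
    moreover from this have "{v \<in> C. b v \<noteq> 0} = {u}"
      by (auto simp: \<phi>_def)
    ultimately show "b \<in> {b\<in>ZNdom N C. hamming_weight C b = 1}"
      by (auto simp: \<phi>_def ZNdom_def hamming_weight_def)
  qed
  ultimately have "card (C \<times> {1..<N}) \<le> card {b\<in>ZNdom N C. hamming_weight C b = 1}"
    using C by (intro card_inj_on_le) (simp_all add: finite_ZNdom)
  then have "card C * (N - 1) \<le> card {b\<in>ZNdom N C. hamming_weight C b = 1}"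
    by (simp add: card_cartesian_product)
  then have "real (card C * (N - 1)) \<le> real (card {b\<in>ZNdom N C. hamming_weight C b = 1})"
    by (simp only: of_nat_le_iff)
  then show ?thesis
    using N by (simp add: of_nat_diff)
qed

lemma exp_minus_le_exp_square: "0 \<le> (t::real) \<Longrightarrow> exp t - t \<le> exp (t\<^sup>2)"
proof (cases "t \<le> 1")
  case True
  assume "0 \<le> t"
  then have "exp t \<le> 1 + t + t\<^sup>2"
    using exp_bound True by simp
  moreover have "1 + t\<^sup>2 \<le> exp (t\<^sup>2)"
    by (rule exp_ge_add_one_self)
  ultimately show ?thesis
    by linarith
next
  case False
  assume "0 \<le> t"
  then have "exp t \<le> exp (t\<^sup>2)"
    using False by (simp add: power2_eq_square)
  then show ?thesis
    using \<open>0 \<le> t\<close> by linarith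
qed

lemma sum_hamming_weight_ne_1_le_exp:
  fixes R :: real
  assumes C: "finite C" and N: "N \<ge> 1" and R: "R \<ge> 0"
  shows "(\<Sum>b\<in>{b\<in>ZNdom N C. hamming_weight C b \<noteq> 1}. R ^ hamming_weight C b)
      \<le> exp (((real N - 1) * R)\<^sup>2 * (if 2 \<le> card C then real (card C) ^ 2 else 0))"
proof -
  define y where "y = (real N - 1) * R"
  define m where "m = card C"
  have y: "y \<ge> 0"
    using N R by (simp add: y_def)
  have "(1 + y) ^ m = (\<Sum>b\<in>{b\<in>ZNdom N C. hamming_weight C b \<noteq> 1}. R ^ hamming_weight C b)
      + (\<Sum>b\<in>{b\<in>ZNdom N C. hamming_weight C b = 1}. R ^ hamming_weight C b)"
    unfolding y_def m_def sum_ZNdom_pow_hamming_weight[OF C N, symmetric]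
    using finite_ZNdom[OF C] by (subst sum.union_disjoint[symmetric]) (auto intro: sum.cong)
  moreover have "real m * y \<le> (\<Sum>b\<in>{b\<in>ZNdom N C. hamming_weight C b = 1}. R ^ hamming_weight C b)"
    using mult_right_mono[OF card_hamming_weight_1_ge[OF C N] R] by (simp add: y_def m_def mult.assoc)
  ultimately have bound: "(\<Sum>b\<in>{b\<in>ZNdom N C. hamming_weight C b \<noteq> 1}. R ^ hamming_weight C b)
      \<le> (1 + y) ^ m - real m * y"
    by linarith
  show ?thesis
  proof (cases "2 \<le> m")
    case True
    have "(1 + y) ^ m \<le> exp y ^ m"
      using y exp_ge_add_one_self[of y] by (intro power_mono) auto
    also have "\<dots> = exp (real m * y)"
      by (simp add: exp_of_nat_mult)
    finally have "(1 + y) ^ m \<le> exp (real m * y)" .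
    then have "(1 + y) ^ m - real m * y \<le> exp ((real m * y)\<^sup>2)"
      using exp_minus_le_exp_square[of "real m * y"] y by simp
    then show ?thesis
      using bound True by (simp add: m_def y_def power_mult_distrib mult.commute)
  next
    case False
    then have "m = 0 \<or> m = 1"
      by auto
    then show ?thesis
      using bound False by (auto simp: m_def)
  qed
qed

section \<open>Choice of the radius\<close>

lemma power_eq_powr_half:
  assumes "0 < (x::real)"
  shows "x ^ d = (x\<^sup>2) powr (real d / 2)"
proof -
  have "(x\<^sup>2) powr (real d / 2) = (x powr 2) powr (real d / 2)"
    using assms by (simp add: powr_realpow)
  also have "\<dots> = x powr real d"
    by (simp add: powr_powr)
  finally show ?thesis
    using assms by (simp add: powr_realpow)
qed

lemma exp_1_mult_le: "2 \<le> (M::real) \<Longrightarrow> exp 1 * (M - 1)\<^sup>2 * 2 \<le> 20 * M\<^sup>2"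
proof -
  assume M: "2 \<le> M"
  then have "(M - 1)\<^sup>2 \<le> M\<^sup>2"
    by (intro power_mono) auto
  then have "exp 1 * (M - 1)\<^sup>2 * 2 \<le> 3 * M\<^sup>2 * 2"
    using exp_le by (intro mult_right_mono mult_mono) auto
  then show ?thesis
    using zero_le_power2[of M] by linarith
qed

(* R is chosen so that ((M - 1) R)^2 T = d / 2. *)
lemma exp_div_power_le_powr:
  fixes M T Z :: real and d :: nat
  assumes M: "M \<ge> 2" and d: "d \<ge> 1" and T: "T > 0" and Z: "0 \<le> Z" "Z \<le> T"
  defines "R \<equiv> sqrt (real d / (2 * T)) / (M - 1)"
  shows "R > 0" and "exp (((M - 1) * R)\<^sup>2 * Z) / R ^ d \<le> (20 * M\<^sup>2 * T / real d) powr (real d / 2)"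
proof -
  define A where "A = real d / (2 * T)"
  define a where "a = real d / 2"
  have A: "A > 0"
    using d T by (simp add: A_def)
  show R: "R > 0"
    using A M by (simp add: R_def A_def[symmetric])
  have MR2: "((M - 1) * R)\<^sup>2 = A"
    using M A by (simp add: R_def A_def[symmetric] power_divide)
  then have R2: "R\<^sup>2 = A / (M - 1)\<^sup>2"
    using M by (simp add: power_mult_distrib eq_divide_eq mult.commute)
  have "R ^ d = (R\<^sup>2) powr a"
    unfolding a_def by (rule power_eq_powr_half[OF R])
  then have Rd: "R ^ d = (A / (M - 1)\<^sup>2) powr a"
    by (simp only: R2)
  have "exp (A * Z) \<le> exp a"
    using mult_left_mono[OF Z(2), of A] A T by (simp add: A_def a_def)
  then have "exp (((M - 1) * R)\<^sup>2 * Z) / R ^ d \<le> exp a / R ^ d"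
    using R by (simp add: MR2 divide_right_mono)
  also have "\<dots> = (exp 1 / (A / (M - 1)\<^sup>2)) powr a"
  proof -
    have "exp a = exp 1 powr a"
      by (simp add: powr_def)
    then show ?thesis
      unfolding Rd using A by (subst powr_divide) auto
  qed
  also have "\<dots> \<le> (20 * M\<^sup>2 * T / real d) powr a"
  proof (rule powr_mono2)
    have "exp 1 * (M - 1)\<^sup>2 * 2 * T / real d \<le> 20 * M\<^sup>2 * T / real d"
      using exp_1_mult_le[OF M] T d by (intro divide_right_mono mult_right_mono) auto
    then show "exp 1 / (A / (M - 1)\<^sup>2) \<le> 20 * M\<^sup>2 * T / real d"
      using d T M by (simp add: A_def field_simps)
  qed (use A in \<open>auto simp: a_def\<close>)
  finally show "exp (((M - 1) * R)\<^sup>2 * Z) / R ^ d \<le> (20 * M\<^sup>2 * T / real d) powr (real d / 2)"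
    by (simp add: a_def)
qed

lemma le_sqrt_mult_max:
  fixes \<gamma> x s t :: real
  assumes "0 \<le> \<gamma>" "\<gamma> \<le> 1" "0 \<le> x" "\<gamma> * x \<le> s"
  shows "\<gamma> * x \<le> sqrt (x * max s t)"
proof (rule real_le_rsqrt)
  have "(\<gamma> * x)\<^sup>2 \<le> x * (\<gamma> * x)"
    using assms mult_right_mono[of \<gamma> 1 "\<gamma> * x * x"] by (simp add: power2_eq_square mult_ac)
  also have "\<dots> \<le> x * max s t"
    using assms by (intro mult_left_mono) auto
  finally show "(\<gamma> * x)\<^sup>2 \<le> x * max s t" .
qed

section \<open>The function g of a non-cyclic restriction sequence\<close>

locale acyclic_restriction =
  fixes N k :: nat and V :: "'v set" and EI :: "'e set" and ev :: "'e \<Rightarrow> 'v list"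
    and mu :: "'e \<Rightarrow> nat list \<Rightarrow> real" and n :: nat and \<alpha> :: real and K :: nat
    and z :: "'e \<Rightarrow> nat \<Rightarrow> nat list \<Rightarrow> nat list option"
  assumes N_ge_2: "N \<ge> 2"
    and graph: "dlk_graph N k V EI ev mu"
    and restr: "restr_seq N k EI ev n \<alpha> K z"
    and acyclic: "\<not> cyclic k EI ev K z"
begin

abbreviation "L \<equiv> V \<times> {..<n}"
abbreviation "T \<equiv> restr_edges EI K z"
abbreviation "F \<equiv> edge_factor N k ev mu z"
abbreviation "vset \<equiv> \<lambda>t. set (edge_vertices ev t)"
abbreviation "g \<equiv> gz N k EI ev mu K z"

lemma N_ge_1: "N \<ge> 1"
  using N_ge_2 by simp

lemma finite_L: "finite L"
  using graph by (simp add: dlk_graph_def)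

lemma finite_T: "finite T"
  using graph restr by (simp add: dlk_graph_def finite_restr_edges)

lemma g_eq_prod: "g x = (\<Prod>t\<in>T. F t x)"
  using graph restr by (simp add: dlk_graph_def gz_eq_prod_edge_factor)

lemma restr_edgeE:
  assumes "t \<in> T"
  obtains e j "is" c where "t = (e, j, is)" "e \<in> EI" "j < K" "is \<in> supp z e j" "z e j is = Some c"
    "length is = k" "set is \<subseteq> {..<n}" "c \<in> ZNk N k"
    "length (ev e) = k" "distinct (ev e)" "set (ev e) \<subseteq> V"
proof -
  obtain e j "is" where t: "t = (e, j, is)" and e: "e \<in> EI" and j: "j < K" and "is": "is \<in> supp z e j"
    using assms by (cases t) auto
  then obtain c where c: "z e j is = Some c"
    by (auto simp: supp_def)
  have "is \<in> Ue k n" "c \<in> ZNk N k"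
    using restr e j c unfolding restr_seq_def by blast+
  moreover have "length (ev e) = k" "distinct (ev e)" "set (ev e) \<subseteq> V"
    using graph e unfolding dlk_graph_def by blast+
  ultimately show thesis
    using that[OF t e j "is" c] by (simp add: Ue_def)
qed

lemma length_edge_vertices: "t \<in> T \<Longrightarrow> length (edge_vertices ev t) = k"
  by (erule restr_edgeE) simp

lemma distinct_edge_vertices: "t \<in> T \<Longrightarrow> distinct (edge_vertices ev t)"
  by (erule restr_edgeE) (simp add: distinct_zipI1)

lemma card_vset: "t \<in> T \<Longrightarrow> card (vset t) = k"
  using distinct_card length_edge_vertices distinct_edge_vertices by metis

lemma vset_subset_L: "t \<in> T \<Longrightarrow> vset t \<subseteq> L"
  by (erule restr_edgeE) (auto dest: set_zip_leftD set_zip_rightD)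

lemma edge_label_in_ZNk: "t \<in> T \<Longrightarrow> the (z (fst t) (fst (snd t)) (snd (snd t))) \<in> ZNk N k"
  by (erule restr_edgeE) simp

lemma edge_factor_eq:
  "t \<in> T \<Longrightarrow> F t = (\<lambda>x. real N ^ length (edge_vertices ev t) *
     mu (fst t) (tsub N (map x (edge_vertices ev t)) (the (z (fst t) (fst (snd t)) (snd (snd t))))))"
  by (auto simp: fun_eq_iff edge_factor_def length_edge_vertices split: prod.split)

lemma edge_arg_in_ZNk:
  "t \<in> T \<Longrightarrow> tsub N (map x (edge_vertices ev t)) (the (z (fst t) (fst (snd t)) (snd (snd t)))) \<in> ZNk N k"
  using N_ge_1 by (intro tsub_in_ZNk) (simp_all add: length_edge_vertices edge_label_in_ZNk)

lemma edge_pmf_props: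
  assumes "t \<in> T"
  shows "\<And>s. s \<in> ZNk N k \<Longrightarrow> 0 \<le> mu (fst t) s" "(\<Sum>s\<in>ZNk N k. mu (fst t) s) = 1"
    "\<And>i a. i < k \<Longrightarrow> a < N \<Longrightarrow> (\<Sum>s\<in>{s\<in>ZNk N k. s ! i = a}. mu (fst t) s) = 1 / real N"
  using assms graph by (auto elim!: restr_edgeE simp: dlk_graph_def)

lemma edge_factor_nonneg: "t \<in> T \<Longrightarrow> 0 \<le> F t x"
  using edge_pmf_props(1) edge_arg_in_ZNk by (simp add: edge_factor_eq)

lemma edge_factor_le: "t \<in> T \<Longrightarrow> F t x \<le> real N ^ (k - 1)"
proof (cases "k = 0")
  case True
  assume t: "t \<in> T"
  have "ZNk N 0 = {[]}"
    by (auto simp: ZNk_def)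
  then show ?thesis
    unfolding edge_factor_eq[OF t]
    using True edge_pmf_props(2)[OF t] length_edge_vertices[OF t] edge_label_in_ZNk[OF t]
    by (simp add: tsub_def ZNk_def)
next
  case False
  assume t: "t \<in> T"
  have mu_le: "mu (fst t) s \<le> 1 / real N" if "s \<in> ZNk N k" for s
    by (rule le_inverse_if_uniform_marginal[of _ _ _ 0]) (use that False edge_pmf_props[OF t] in auto)
  have "F t x \<le> real N ^ k * (1 / real N)"
    unfolding edge_factor_eq[OF t] length_edge_vertices[OF t]
    by (intro mult_left_mono mu_le edge_arg_in_ZNk[OF t]) simp
  also have "\<dots> = real N ^ (k - 1)"
    using False N_ge_1 by (simp add: power_diff)
  finally show ?thesis .
qed

lemma unit_marginal_F:
  assumes t: "t \<in> T" and p: "p \<in> vset t \<or> vset t = {}"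
  shows "unit_marginal N L (vset t - {p}) (F t)"
  unfolding edge_factor_eq[OF t]
  using edge_pmf_props[OF t] p
  by (intro unit_marginal_edge_factor[OF N_ge_1 distinct_edge_vertices[OF t] vset_subset_L[OF t]])
    (auto simp: length_edge_vertices[OF t] edge_label_in_ZNk[OF t])

lemma inj_on_vset:
  assumes k: "k \<ge> 1"
  shows "inj_on vset T"
proof
  fix t1 t2 assume t1: "t1 \<in> T" and t2: "t2 \<in> T" and eq: "vset t1 = vset t2"
  obtain e1 j1 i1 where t1_eq: "t1 = (e1, j1, i1)" and a1: "e1 \<in> EI" "j1 < K" "i1 \<in> supp z e1 j1"
    using t1 by (elim restr_edgeE) auto
  obtain e2 j2 i2 where t2_eq: "t2 = (e2, j2, i2)" and a2: "e2 \<in> EI" "j2 < K" "i2 \<in> supp z e2 j2"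
    using t2 by (elim restr_edgeE) auto
  have same: "hedge ev e1 i1 = hedge ev e2 i2"
    using eq by (simp add: t1_eq t2_eq hedge_def)
  then have ej: "(e1, j1) = (e2, j2)"
    using acyclic a1 a2 unfolding cyclic_def by blast
  show "t1 = t2"
  proof (rule ccontr)
    assume "t1 \<noteq> t2"
    then have "hedge ev e1 i1 \<inter> hedge ev e1 i2 = {}"
      using restr a1 a2 ej t1_eq t2_eq unfolding restr_seq_def by auto
    then have "vset t1 = {}"
      using same ej by (simp add: t1_eq hedge_def)
    then show False
      using card_vset[OF t1] k by simp
  qed
qed

lemma card_Union_vset_gt:
  assumes "S \<subseteq> T" "S \<noteq> {}"
  shows "\<not> real (card (\<Union>(vset ` S))) \<le> real (card (vset ` S)) * (real k - 1)"
proof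
  assume "real (card (\<Union>(vset ` S))) \<le> real (card (vset ` S)) * (real k - 1)"
  moreover have "vset ` S \<subseteq> Hedges EI ev K z" "finite (vset ` S)" "vset ` S \<noteq> {}"
    using assms finite_subset[OF assms(1) finite_T] by (auto simp: Hedges_eq)
  ultimately have "cyclic k EI ev K z"
    unfolding cyclic_def by (intro disjI2 exI[of _ "vset ` S"]) simp
  with acyclic show False ..
qed

lemma leaf_peelable_T: "leaf_peelable vset w T"
  unfolding leaf_peelable_def
proof (intro allI impI)
  fix S assume S: "S \<subseteq> T" and ne: "S \<noteq> {}"
  show "\<exists>t\<in>S. card (vset t \<inter> (\<Union>(vset ` (S - {t})) \<union> {w})) \<le> 1"
  proof (cases "k = 0")
    case True
    obtain t where t: "t \<in> S"
      using ne by blast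
    have "card (vset t \<inter> (\<Union>(vset ` (S - {t})) \<union> {w})) \<le> card (vset t)"
      by (intro card_mono) auto
    also have "\<dots> = 0"
      using card_vset t S True by blast
    finally show ?thesis
      using t by (intro bexI[of _ t]) simp_all
  next
    case False
    obtain h where "h \<in> vset ` S" and leaf: "card (h \<inter> (\<Union>(vset ` S - {h}) \<union> {w})) \<le> 1"
      using exists_edge_meeting_rest_at_most_once[of "vset ` S" k w] S finite_subset[OF S finite_T]
        card_vset card_Union_vset_gt[OF S ne] by blast
    then obtain t where t: "t \<in> S" and h: "h = vset t"
      by blast
    have "vset ` (S - {t}) = vset ` S - vset ` {t}"
      using False S t by (intro inj_on_image_set_diff[OF inj_on_vset]) auto
    then show ?thesis
      using leaf t h by (intro bexI[of _ t]) simp_all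
  qed
qed

lemma sum_prod_F_mult:
  fixes h :: "('v \<times> nat \<Rightarrow> nat) \<Rightarrow> complex"
  assumes S: "S \<subseteq> T" and h: "depends_only N L (L - (\<Union>(vset ` S) - {w})) h"
  shows "(\<Sum>x\<in>ZNdom N L. of_real (\<Prod>t\<in>S. F t x) * h x) = (\<Sum>x\<in>ZNdom N L. h x)"
proof (rule sum_prod_unit_marginals_mult[OF finite_L N_ge_1 finite_subset[OF S finite_T] _ _ _ _ h])
  show "vset t \<subseteq> L" if "t \<in> S" for t
    using that S vset_subset_L by blast
  show "depends_only N L (vset t) (F t)" for t
    by (rule depends_only_edge_factor)
  show "unit_marginal N L (vset t - {p}) (F t)" if "t \<in> S" "p \<in> vset t \<or> vset t = {}" for t p
    using that S unit_marginal_F by blast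
  show "leaf_peelable vset w S"
    using leaf_peelable_T S by (rule leaf_peelable_subset)
qed

lemma g_nonneg: "0 \<le> g x"
  unfolding g_eq_prod by (intro prod_nonneg) (simp add: edge_factor_nonneg)

lemma sum_g_eq_card: "(\<Sum>x\<in>ZNdom N L. g x) = real (card (ZNdom N L))"
proof -
  have "(\<Sum>x\<in>ZNdom N L. of_real (\<Prod>t\<in>T. F t x) * (1::complex)) = (\<Sum>x\<in>ZNdom N L. 1)"
    by (rule sum_prod_F_mult) (auto simp: depends_only_def)
  then have "complex_of_real (\<Sum>x\<in>ZNdom N L. g x) = of_nat (card (ZNdom N L))"
    by (simp add: g_eq_prod)
  then show ?thesis
    by (metis of_real_eq_iff of_real_of_nat_eq)
qed

lemma expect_g: "expect N L g = 1"
  using sum_g_eq_card N_ge_1 finite_L by (simp add: expect_def card_ZNdom)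

lemma norm_fhat_le_1: "cmod (fhat N L g b) \<le> 1"
proof -
  have "cmod (\<Sum>x\<in>ZNdom N L. of_real (g x) * cnj (chi N L b x)) \<le> (\<Sum>x\<in>ZNdom N L. g x)"
    using norm_sum[of "\<lambda>x. of_real (g x) * cnj (chi N L b x)"] g_nonneg
    by (simp add: norm_mult chi_def norm_exp_eq_Re)
  then show ?thesis
    using N_ge_1 finite_L by (simp add: fhat_def sum_g_eq_card norm_divide divide_le_eq card_ZNdom norm_power)
qed

abbreviation "component \<equiv> Hcomp V n (Hedges EI ev K z)"

lemma vset_subset_component:
  assumes t: "t \<in> T" and "u \<in> vset t" "u \<in> component x"
  shows "vset t \<subseteq> component x"
  using assms vset_subset_L[OF t] by (intro edge_subset_Hcomp) (auto simp: Hedges_eq)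

lemma Union_vset_meeting_subset_component:
  "\<Union>(vset ` {t \<in> T. vset t \<inter> component u \<noteq> {}}) \<subseteq> component u"
  using vset_subset_component by blast

lemma fhat_eq_0_if_single_in_component:
  assumes b: "b \<in> ZNdom N L" and u: "u \<in> L" and single: "{v \<in> component u. b v \<noteq> 0} = {w}"
  shows "fhat N L g b = 0"
proof -
  define C where "C = component u"
  define Tc where "Tc = {t \<in> T. vset t \<inter> C \<noteq> {}}"
  define To where "To = T - Tc"
  have wC: "w \<in> C" and bw: "b w \<noteq> 0"
    using single by (auto simp: C_def)
  have wL: "w \<in> L"
    using wC Hcomp_subset[of V n _ u] unfolding C_def by blast
  have Tc_in_C: "\<Union>(vset ` Tc) \<subseteq> C"
    unfolding Tc_def C_def by (rule Union_vset_meeting_subset_component)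
  have To_off_C: "vset t \<subseteq> L - C" if "t \<in> To" for t
    using that vset_subset_L[of t] by (auto simp: To_def Tc_def)
  define G where "G x = complex_of_real (\<Prod>t\<in>To. F t x)" for x
  have G_dep: "depends_only N L (L - C) G"
    unfolding G_def
    by (rule depends_only_comp, rule depends_only_prod, rule depends_only_mono[OF depends_only_edge_factor])
      (rule To_off_C)
  have "depends_only N L (L - (\<Union>(vset ` Tc) - {w})) (\<lambda>x. G x * cnj (chi N L b x))"
  proof (rule depends_only_mult)
    show "depends_only N L (L - (\<Union>(vset ` Tc) - {w})) G"
      by (rule depends_only_mono[OF G_dep]) (use Tc_in_C in blast)
    show "depends_only N L (L - (\<Union>(vset ` Tc) - {w})) (\<lambda>x. cnj (chi N L b x))"
      by (rule depends_only_mono[OF depends_only_comp[OF depends_only_chi]])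
        (use Tc_in_C single in \<open>auto simp: C_def\<close>)
  qed
  then have "(\<Sum>x\<in>ZNdom N L. of_real (\<Prod>t\<in>Tc. F t x) * (G x * cnj (chi N L b x)))
      = (\<Sum>x\<in>ZNdom N L. G x * cnj (chi N L b x))"
    by (rule sum_prod_F_mult[rotated]) (auto simp: Tc_def)
  moreover have "g x = (\<Prod>t\<in>Tc. F t x) * (\<Prod>t\<in>To. F t x)" for x
    unfolding g_eq_prod To_def using prod.subset_diff[OF _ finite_T, of Tc] by (auto simp: Tc_def mult.commute)
  ultimately have "(\<Sum>x\<in>ZNdom N L. of_real (g x) * cnj (chi N L b x))
      = (\<Sum>x\<in>ZNdom N L. G x * cnj (chi N L b x))"
    by (simp add: G_def mult.assoc)
  also have "\<dots> = 0"
    using G_dep wC by (intro sum_mult_cnj_chi_eq_0[OF finite_L wL b bw]) (auto elim: depends_only_mono)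
  finally show ?thesis
    by (simp add: fhat_def)
qed

abbreviation "hcomps \<equiv> component ` L"

lemma finite_V: "finite V"
  using graph by (simp add: dlk_graph_def)

lemma znorm_eq_sum_components:
  "real (znorm V EI ev n K z) = (\<Sum>C\<in>hcomps. if 2 \<le> card C then real (card C) ^ 2 else 0)"
  unfolding znorm_def using finite_L by (simp add: of_nat_sum sum.inter_filter) (intro sum.cong; simp)

lemma sum_admissible_le_exp:
  fixes R :: real
  assumes R: "R \<ge> 0"
  shows "(\<Sum>b\<in>{b\<in>ZNdom N L. \<forall>C\<in>hcomps. hamming_weight C b \<noteq> 1}. R ^ hamming_weight L b)
      \<le> exp (((real N - 1) * R)\<^sup>2 * real (znorm V EI ev n K z))"
proof -
  note partition = Hcomps_partition[OF finite_V, where n = n and HE = "Hedges EI ev K z"]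
  have "(\<Sum>b\<in>{b\<in>ZNdom N L. \<forall>C\<in>hcomps. hamming_weight C b \<noteq> 1}. R ^ hamming_weight L b)
      = (\<Prod>C\<in>hcomps. \<Sum>b\<in>{b\<in>ZNdom N C. hamming_weight C b \<noteq> 1}. R ^ hamming_weight C b)"
    using sum_no_weight_1_blocks_eq_prod[OF partition(1-3)] by (simp only: partition(4))
  also have "\<dots> \<le> (\<Prod>C\<in>hcomps. exp (((real N - 1) * R)\<^sup>2 * (if 2 \<le> card C then real (card C) ^ 2 else 0)))"
    using sum_hamming_weight_ne_1_le_exp[OF partition(2) N_ge_1 R] R
    by (intro prod_mono) (auto intro: sum_nonneg)
  also have "\<dots> = exp (((real N - 1) * R)\<^sup>2 * real (znorm V EI ev n K z))"
    using partition(1) by (simp add: exp_sum znorm_eq_sum_components sum_distrib_left)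
  finally show ?thesis .
qed

lemma walsh_level_le_exp_div_power:
  fixes R :: real
  assumes R: "R > 0"
  shows "walsh_level N L g d \<le> exp (((real N - 1) * R)\<^sup>2 * real (znorm V EI ev n K z)) / R ^ d"
proof -
  define f where "f b = (if \<forall>C\<in>hcomps. hamming_weight C b \<noteq> 1 then R ^ hamming_weight L b else 0) / R ^ d" for b
  have "cmod (fhat N L g b) \<le> f b" if "b \<in> ZNdom N L" "hamming_weight L b = d" for b
  proof (cases "\<forall>C\<in>hcomps. hamming_weight C b \<noteq> 1")
    case True
    then show ?thesis
      using norm_fhat_le_1[of b] that R by (simp add: f_def)
  next
    case False
    then obtain u where u: "u \<in> L" and weight: "hamming_weight (component u) b = 1"
      by blast
    from weight obtain w where "{v \<in> component u. b v \<noteq> 0} = {w}"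
      unfolding hamming_weight_def by (rule card_1_singletonE)
    with u have "fhat N L g b = 0"
      by (rule fhat_eq_0_if_single_in_component[OF that(1)])
    moreover have "f b = 0"
      unfolding f_def using False by (simp only: if_False div_0)
    ultimately show ?thesis
      by simp
  qed
  then have "walsh_level N L g d \<le> (\<Sum>b\<in>{b\<in>ZNdom N L. hamming_weight L b = d}. f b)"
    unfolding walsh_level_def hamming_weight_def[symmetric] by (intro sum_mono) auto
  also have "\<dots> \<le> (\<Sum>b\<in>ZNdom N L. f b)"
    using finite_ZNdom[OF finite_L] R by (intro sum_mono2) (auto simp: f_def)
  also have "\<dots> = (\<Sum>b\<in>{b\<in>ZNdom N L. \<forall>C\<in>hcomps. hamming_weight C b \<noteq> 1}. R ^ hamming_weight L b) / R ^ d"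
    unfolding f_def sum_divide_distrib[symmetric] using finite_ZNdom[OF finite_L] by (simp add: sum.inter_filter)
  also have "\<dots> \<le> exp (((real N - 1) * R)\<^sup>2 * real (znorm V EI ev n K z)) / R ^ d"
    using sum_admissible_le_exp R by (intro divide_right_mono) auto
  finally show ?thesis .
qed

lemma walsh_level_le_FC:
  assumes d: "1 \<le> d" and n: "0 < n" and Z: "real (znorm V EI ev n K z) \<le> sqrt (real n * max s (real d))"
  shows "walsh_level N L g d \<le> FC (20 * real N ^ 2) n d s"
proof -
  define T where "T = sqrt (real n * max s (real d))"
  define R where "R = sqrt (real d / (2 * T)) / (real N - 1)"
  have N: "real N \<ge> 2"
    using N_ge_2 by simp
  have T: "T > 0"
    using n d by (simp add: T_def)
  have Z': "0 \<le> real (znorm V EI ev n K z)" "real (znorm V EI ev n K z) \<le> T"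
    using Z by (simp_all add: T_def)
  note bound = exp_div_power_le_powr[OF N d T Z', folded R_def]
  have "walsh_level N L g d \<le> exp (((real N - 1) * R)\<^sup>2 * real (znorm V EI ev n K z)) / R ^ d"
    by (rule walsh_level_le_exp_div_power[OF bound(1)])
  also have "\<dots> \<le> (20 * (real N)\<^sup>2 * T / real d) powr (real d / 2)"
    by (rule bound(2))
  finally show ?thesis
    by (simp add: FC_def T_def)
qed

lemma card_T_le_card_Union_vset:
  assumes k: "k \<ge> 1"
  shows "(k - 1) * card T \<le> card (\<Union>(vset ` T))"
proof (cases "T = {}")
  case True
  then show ?thesis by simp
next
  case False
  have "card (vset ` T) = card T"
    using k by (intro card_image inj_on_vset)
  then have "real ((k - 1) * card T) = real (card (vset ` T)) * (real k - 1)"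
    using k by (simp add: of_nat_diff)
  also have "\<dots> < real (card (\<Union>(vset ` T)))"
    using card_Union_vset_gt[OF order_refl False] by simp
  finally show ?thesis
    by (simp only: of_nat_less_iff less_imp_le)
qed

lemma Union_vset_subset_large_components:
  assumes k: "k \<ge> 2"
  shows "\<Union>(vset ` T) \<subseteq> \<Union>{C \<in> hcomps. 2 \<le> card C}"
proof
  fix v assume "v \<in> \<Union>(vset ` T)"
  then obtain t where t: "t \<in> T" and v: "v \<in> vset t"
    by blast
  then have vL: "v \<in> L"
    using vset_subset_L by blast
  have "vset t \<subseteq> component v"
    using vset_subset_component[OF t v self_in_Hcomp[OF vL]] .
  then have "card (vset t) \<le> card (component v)"
    by (rule card_mono[OF finite_subset[OF Hcomp_subset finite_L]])
  then have "k \<le> card (component v)"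
    using card_vset[OF t] by simp
  moreover have "component v \<in> hcomps" "v \<in> component v"
    using vL self_in_Hcomp[OF vL] by auto
  ultimately show "v \<in> \<Union>{C \<in> hcomps. 2 \<le> card C}"
    using k by (intro UnionI[of "component v"]) auto
qed

lemma card_Union_large_components_le_znorm:
  "card (\<Union>{C \<in> hcomps. 2 \<le> card C}) \<le> znorm V EI ev n K z"
proof -
  have "card (\<Union>{C \<in> hcomps. 2 \<le> card C}) \<le> (\<Sum>C\<in>{C \<in> hcomps. 2 \<le> card C}. card C)"
    by (rule card_Union_le_sum_card)
  also have "\<dots> \<le> (\<Sum>C\<in>{C \<in> hcomps. 2 \<le> card C}. card C ^ 2)"
    by (intro sum_mono) (simp add: power2_eq_square)
  finally show ?thesis
    by (simp add: znorm_def)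
qed

lemma card_T_le_znorm:
  assumes k: "k \<ge> 2"
  shows "(k - 1) * card T \<le> znorm V EI ev n K z"
proof -
  have fin: "finite (\<Union>{C \<in> hcomps. 2 \<le> card C})"
    by (rule finite_subset[OF _ finite_L]) (use Hcomp_subset in blast)
  have "(k - 1) * card T \<le> card (\<Union>(vset ` T))"
    using k by (intro card_T_le_card_Union_vset) simp
  also have "\<dots> \<le> card (\<Union>{C \<in> hcomps. 2 \<le> card C})"
    using fin Union_vset_subset_large_components[OF k] by (rule card_mono)
  also have "\<dots> \<le> znorm V EI ev n K z"
    by (rule card_Union_large_components_le_znorm)
  finally show ?thesis .
qed

lemma abs_g_le:
  assumes Z: "real (znorm V EI ev n K z) \<le> M" and M: "M \<ge> 0"
  shows "\<bar>g x\<bar> \<le> real N powr M"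
proof -
  have "g x \<le> (\<Prod>t\<in>T. real N ^ (k - 1))"
    unfolding g_eq_prod by (intro prod_mono conjI edge_factor_nonneg edge_factor_le)
  also have "\<dots> = real N ^ ((k - 1) * card T)"
    by (simp add: power_mult)
  also have "\<dots> = real N powr real ((k - 1) * card T)"
    using N_ge_1 by (intro powr_realpow[symmetric]) simp
  also have "\<dots> \<le> real N powr M"
  proof (rule powr_mono)
    show "real ((k - 1) * card T) \<le> M"
    proof (cases "k \<ge> 2")
      case True
      then have "real ((k - 1) * card T) \<le> real (znorm V EI ev n K z)"
        by (simp only: of_nat_le_iff card_T_le_znorm)
      then show ?thesis
        using Z by linarith
    next
      case False
      then show ?thesis
        using M by simp
    qed
  qed (use N_ge_1 in simp)
  finally show ?thesis
    using g_nonneg[of x] by simp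
qed

end

theorem lemma6p5:
  fixes N k n K :: nat and V :: "'v set" and EI :: "'e set" and ev :: "'e \<Rightarrow> 'v list"
    and mu :: "'e \<Rightarrow> nat list \<Rightarrow> real" and \<alpha> \<gamma> :: real
    and z :: "'e \<Rightarrow> nat \<Rightarrow> nat list \<Rightarrow> nat list option"
  assumes "N \<ge> 2"
    and "dlk_graph N k V EI ev mu"
    and "restr_seq N k EI ev n \<alpha> K z"
    and "\<not> cyclic k EI ev K z"
    and "0 < \<gamma>" and "\<gamma> < 1"
    and "real (znorm V EI ev n K z) \<le> \<gamma> * real n"
  shows "bounded_fn N (V \<times> {..<n}) n (20 * real N ^ 2) (\<gamma> * real n * log 2 (real N)) 0
           (gz N k EI ev mu K z)"
proof -
  interpret acyclic_restriction N k V EI ev mu n \<alpha> K z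
    using assms(1-4) by unfold_locales
  define s where "s = \<gamma> * real n * log 2 (real N)"
  have "\<gamma> * real n \<le> s"
    using assms(1,5) mult_left_mono[of 1 "log 2 (real N)" "\<gamma> * real n"] by (simp add: s_def)
  then have Z: "real (znorm V EI ev n K z) \<le> sqrt (real n * max s (real d))" for d
    using assms(5,6) by (intro order_trans[OF assms(7) le_sqrt_mult_max]) auto
  have "walsh_level N L g d \<le> FC (20 * real N ^ 2) n d s"
    if d: "1 \<le> d" "real d \<le> real n / (20 * real N ^ 2)\<^sup>2" for d
  proof (rule walsh_level_le_FC[OF d(1) _ Z])
    have "1 \<le> real d"
      using d(1) by simp
    then have "0 < real n / (20 * real N ^ 2)\<^sup>2"
      using d(2) by linarith
    then show "0 < n"
      by (simp add: zero_less_divide_iff)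
  qed
  moreover have "\<bar>g x\<bar> \<le> 2 powr s" for x
    using abs_g_le[OF assms(7)] assms(1,5)
    by (simp add: s_def powr_powr[symmetric] mult.commute[of _ "log 2 (real N)"])
  ultimately show ?thesis
    unfolding bounded_fn_def s_def[symmetric] using g_nonneg expect_g by simp
qed

end
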